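(* Let $G$ be a graph and let $v$ be a cut vertex of $G$ which decomposes $G$ into $G_1=G(V_1)$ and $H=G(U)$. If $H$ is a tree, then for every divisor $f$ on $G$ we have $\rho_G(f)=\rho_{G_1}(f_{G/H})$.
   Context: Graphs are finite, undirected, connected, loopless, possibly with multiple edges; $G(W)$ denotes the subgraph induced by $W\subseteq V(G)$. A vertex $v$ is a cut vertex if removing it disconnects $G$; it decomposes $G$ into $G_1=G(V_1)$ and $H=G(U)$ if $V(G)=V_1\cup U$, $V_1\cap U=\{v\}$, both induced subgraphs are connected, and no edge joins $V_1\setminus\{v\}$ to $U\setminus\{v\}$. For a divisor $f$ on $G$ (a function $V(G)\to\mathbb{Z}$), the contraction $f_{G/H}$ is the divisor on $G_1$ with $f_{G/H}(u)=f(u)$ for $u\in V_1\setminus\{v\}$ and $f_{G/H}(v)=\sum_{u\in U}f(u)$. Degree: $\deg(f)=\sum f(v)$. Laplacian $\Delta_G$: $\Delta_G(u,u)=\deg(u)$, $\Delta_G(u,w)=-e(u,w)$ (number of edges) for $u\ne w$. $f\sim g$ if $g=f+x\Delta_G$ for some $x\in\mathbb{Z}^{V(G)}$. Effective: all values $\ge0$; L-effective: linearly equivalent to an effective divisor. The rank $\rho_G(f)$ is $-1$ if $f$ is not L-effective, and otherwise the largest integer $r\ge0$ such that $f-\lambda$ is L-effective for every effective $\lambda$ of degree $r$ on $G$. $\rho_{G_1}$ is the rank computed in the graph $G_1$. *)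

theory Defs
  imports Main
begin

text \<open>A (multi)graph is a finite nonempty vertex set V together with an edge-multiplicity
  function e (number of edges between two vertices): symmetric, loopless, supported on V.\<close>

definition is_graph :: "'a set \<Rightarrow> ('a \<Rightarrow> 'a \<Rightarrow> nat) \<Rightarrow> bool" where
  "is_graph V e \<longleftrightarrow> finite V \<and> V \<noteq> {} \<and> (\<forall>u w. e u w = e w u) \<and> (\<forall>u. e u u = 0)
     \<and> (\<forall>u w. 0 < e u w \<longrightarrow> u \<in> V \<and> w \<in> V)"

definition induced :: "('a \<Rightarrow> 'a \<Rightarrow> nat) \<Rightarrow> 'a set \<Rightarrow> 'a \<Rightarrow> 'a \<Rightarrow> nat" where
  "induced e W = (\<lambda>u w. if u \<in> W \<and> w \<in> W then e u w else 0)"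

definition connected_on :: "'a set \<Rightarrow> ('a \<Rightarrow> 'a \<Rightarrow> nat) \<Rightarrow> bool" where
  "connected_on W e \<longleftrightarrow> W \<noteq> {} \<and>
     (\<forall>u\<in>W. \<forall>w\<in>W. (\<lambda>a b. a \<in> W \<and> b \<in> W \<and> 0 < e a b)\<^sup>*\<^sup>* u w)"

definition cut_vertex :: "'a set \<Rightarrow> ('a \<Rightarrow> 'a \<Rightarrow> nat) \<Rightarrow> 'a \<Rightarrow> bool" where
  "cut_vertex V e v \<longleftrightarrow> v \<in> V \<and> \<not> connected_on (V - {v}) e"

definition decomposes :: "'a set \<Rightarrow> ('a \<Rightarrow> 'a \<Rightarrow> nat) \<Rightarrow> 'a \<Rightarrow> 'a set \<Rightarrow> 'a set \<Rightarrow> bool" where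
  "decomposes V e v V1 U \<longleftrightarrow> V = V1 \<union> U \<and> V1 \<inter> U = {v} \<and>
     connected_on V1 e \<and> connected_on U e \<and>
     (\<forall>a\<in>V1 - {v}. \<forall>b\<in>U - {v}. e a b = 0)"

text \<open>G(U) is a tree: connected with |U| - 1 edges (counted with multiplicity).\<close>
definition is_tree_on :: "'a set \<Rightarrow> ('a \<Rightarrow> 'a \<Rightarrow> nat) \<Rightarrow> bool" where
  "is_tree_on U e \<longleftrightarrow> connected_on U e \<and>
     (\<Sum>u\<in>U. \<Sum>w\<in>U. e u w) = 2 * (card U - 1)"

definition vdeg :: "'a set \<Rightarrow> ('a \<Rightarrow> 'a \<Rightarrow> nat) \<Rightarrow> 'a \<Rightarrow> int" where
  "vdeg V e u = (\<Sum>w\<in>V. int (e u w))"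

definition laplacian :: "'a set \<Rightarrow> ('a \<Rightarrow> 'a \<Rightarrow> nat) \<Rightarrow> 'a \<Rightarrow> 'a \<Rightarrow> int" where
  "laplacian V e u w = (if u = w then vdeg V e u else - int (e u w))"

definition lin_equiv :: "'a set \<Rightarrow> ('a \<Rightarrow> 'a \<Rightarrow> nat) \<Rightarrow> ('a \<Rightarrow> int) \<Rightarrow> ('a \<Rightarrow> int) \<Rightarrow> bool" where
  "lin_equiv V e f g \<longleftrightarrow> (\<exists>x :: 'a \<Rightarrow> int. \<forall>u\<in>V. g u = f u + (\<Sum>w\<in>V. x w * laplacian V e w u))"

definition effective :: "'a set \<Rightarrow> ('a \<Rightarrow> int) \<Rightarrow> bool" where
  "effective V f \<longleftrightarrow> (\<forall>u\<in>V. 0 \<le> f u)"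

definition L_effective :: "'a set \<Rightarrow> ('a \<Rightarrow> 'a \<Rightarrow> nat) \<Rightarrow> ('a \<Rightarrow> int) \<Rightarrow> bool" where
  "L_effective V e f \<longleftrightarrow> (\<exists>g. lin_equiv V e f g \<and> effective V g)"

definition div_degree :: "'a set \<Rightarrow> ('a \<Rightarrow> int) \<Rightarrow> int" where
  "div_degree V f = (\<Sum>u\<in>V. f u)"

definition div_rank :: "'a set \<Rightarrow> ('a \<Rightarrow> 'a \<Rightarrow> nat) \<Rightarrow> ('a \<Rightarrow> int) \<Rightarrow> int" where
  "div_rank V e f = (if \<not> L_effective V e f then -1 else
     int (GREATEST r :: nat. \<forall>D. effective V D \<and> div_degree V D = int r
            \<longrightarrow> L_effective V e (\<lambda>u. f u - D u)))"

text \<open>Contraction f_{G/H} on G1 = G(V1), where H = G(U) is glued at v.\<close>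
definition contract :: "'a set \<Rightarrow> 'a \<Rightarrow> ('a \<Rightarrow> int) \<Rightarrow> 'a \<Rightarrow> int" where
  "contract U v f = (\<lambda>u. if u = v then (\<Sum>w\<in>U. f w) else f u)"

end

theory Submission
  imports Defs
begin

text \<open>Contraction commutes with firing: the contraction of \<open>x \<Delta>(G)\<close> is \<open>x \<Delta>(G1)\<close>, because the
  two Laplacians agree at the vertices of \<open>V1 - {v}\<close> and both have zero column sums. Hence
  \<open>f_{G/H}\<close> is L-effective whenever \<open>f\<close> is. Conversely, on the tree \<open>H\<close> leaf induction shows
  that every divisor can be moved, by firing only vertices of \<open>U - {v}\<close>, to one vanishing on
  \<open>U - {v}\<close> without changing its contraction; such a divisor is effective iff its contraction
  is. Finally effective divisors of degree \<open>r\<close> on \<open>G\<close> contract to effective divisors of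
  degree \<open>r\<close> on \<open>G1\<close>, and every one of those arises this way (extend by zero), so the two
  rank conditions coincide for every \<open>r\<close>.\<close>

definition firing_div :: "'a set \<Rightarrow> ('a \<Rightarrow> 'a \<Rightarrow> nat) \<Rightarrow> ('a \<Rightarrow> int) \<Rightarrow> 'a \<Rightarrow> int" where
  "firing_div V e x u = (\<Sum>w\<in>V. x w * laplacian V e w u)"

lemma lin_equiv_iff_firing_div:
  "lin_equiv V e f g \<longleftrightarrow> (\<exists>x. \<forall>u\<in>V. g u = f u + firing_div V e x u)"
  by (simp add: lin_equiv_def firing_div_def)

lemma L_effective_cong:
  "(\<And>u. u \<in> V \<Longrightarrow> f u = g u) \<Longrightarrow> L_effective V e f \<longleftrightarrow> L_effective V e g"
  unfolding L_effective_def lin_equiv_def by auto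

lemma firing_div_eq:
  assumes "finite V" "u \<in> V" "e u u = 0"
  shows "firing_div V e x u = x u * vdeg V e u - (\<Sum>w\<in>V. x w * int (e w u))"
proof -
  have "firing_div V e x u = (\<Sum>w\<in>V. (if w = u then x u * vdeg V e u else 0) - x w * int (e w u))"
    unfolding firing_div_def by (rule sum.cong) (auto simp: laplacian_def assms(3) algebra_simps)
  then show ?thesis
    using assms(1,2) by (simp add: sum_subtractf)
qed

lemma sum_firing_div:
  assumes "finite V" "\<forall>a. e a a = 0"
  shows "(\<Sum>u\<in>V. firing_div V e x u) = 0"
proof -
  have "(\<Sum>u\<in>V. firing_div V e x u)
      = (\<Sum>u\<in>V. x u * vdeg V e u) - (\<Sum>u\<in>V. \<Sum>w\<in>V. x w * int (e w u))"
    using assms by (simp add: firing_div_eq sum_subtractf)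
  also have "(\<Sum>u\<in>V. \<Sum>w\<in>V. x w * int (e w u)) = (\<Sum>w\<in>V. x w * vdeg V e w)"
    by (subst sum.swap) (simp add: vdeg_def sum_distrib_left)
  finally show ?thesis by simp
qed

lemma firing_div_subset:
  assumes "finite V" "W \<subseteq> V" "u \<in> W" "\<forall>a b. e a b = e b a" "\<forall>w\<in>V - W. e u w = 0"
  shows "firing_div V e x u = firing_div W e x u"
proof -
  have "vdeg V e u = vdeg W e u"
    unfolding vdeg_def using assms by (intro sum.mono_neutral_right) auto
  then have "laplacian V e w u = laplacian W e w u" for w
    by (simp add: laplacian_def)
  moreover have "\<forall>w\<in>V - W. x w * laplacian V e w u = 0"
    using assms by (auto simp: laplacian_def)
  ultimately show ?thesis
    unfolding firing_div_def using assms(1,2) by (simp add: sum.mono_neutral_right)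
qed

lemma firing_div_induced:
  assumes "u \<in> W"
  shows "firing_div W (induced e W) x u = firing_div W e x u"
proof -
  have "vdeg W (induced e W) u = vdeg W e u"
    unfolding vdeg_def using assms by (intro sum.cong) (auto simp: induced_def)
  then show ?thesis
    unfolding firing_div_def using assms by (intro sum.cong) (auto simp: laplacian_def induced_def)
qed

lemma firing_div_insert:
  assumes "finite W" "u \<in> W" "l \<notin> W" "\<forall>a b. e a b = e b a" "\<forall>a. e a a = 0"
  shows "firing_div (insert l W) e x u = firing_div W e x u + int (e l u) * (x u - x l)"
proof -
  have "vdeg (insert l W) e u = vdeg W e u + int (e l u)"
    using assms by (simp add: vdeg_def)
  then show ?thesis
    using assms by (simp add: firing_div_eq algebra_simps)
qed

lemma firing_div_add:
  "firing_div V e (\<lambda>w. x w + y w) u = firing_div V e x u + firing_div V e y u"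
  by (simp add: firing_div_def distrib_right sum.distrib)

lemma contract_add: "contract U v (\<lambda>u. f u + g u) = (\<lambda>u. contract U v f u + contract U v g u)"
  by (auto simp: contract_def sum.distrib)

lemma contract_diff: "contract U v (\<lambda>u. f u - g u) = (\<lambda>u. contract U v f u - contract U v g u)"
  by (auto simp: contract_def sum_subtractf)

lemma contract_vanishing:
  assumes "finite U" "v \<in> U" "\<forall>u\<in>U - {v}. h u = 0"
  shows "contract U v h = h"
  using assms by (auto simp: contract_def sum.remove)

lemma connected_on_has_neighbour:
  assumes "connected_on U e" "u \<in> U" "w \<in> U" "u \<noteq> w"
  obtains z where "z \<in> U" "0 < e u z"
proof -
  have "(\<lambda>a b. a \<in> U \<and> b \<in> U \<and> 0 < e a b)\<^sup>*\<^sup>* u w"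
    using assms unfolding connected_on_def by blast
  then show ?thesis
    using assms(4) that by (cases rule: converse_rtranclpE) auto
qed

text \<open>If every vertex other than \<open>v\<close> had degree at least 2, the degrees would add up to
  at least \<open>1 + 2 (card U - 1)\<close>, one more than a tree has.\<close>
lemma tree_has_leaf:
  assumes tree: "is_tree_on U e" and "finite U" "v \<in> U" "2 \<le> card U"
  shows "\<exists>l\<in>U - {v}. (\<Sum>z\<in>U. e l z) = 1"
proof (rule ccontr)
  assume no_leaf: "\<not> ?thesis"
  have "(if u = v then 1 else 2) \<le> (\<Sum>z\<in>U. e u z)" if u: "u \<in> U" for u
  proof -
    obtain w where "w \<in> U" "w \<noteq> u"
      using \<open>2 \<le> card U\<close> u by (metis card_le_Suc0_iff_eq \<open>finite U\<close> not_less_eq_eq numeral_2_eq_2)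
    then obtain z where "z \<in> U" "0 < e u z"
      using tree u unfolding is_tree_on_def by (metis connected_on_has_neighbour)
    then have "0 < (\<Sum>z\<in>U. e u z)"
      using \<open>finite U\<close> by (metis gr_zeroI sum_eq_0_iff)
    moreover have "u \<noteq> v \<Longrightarrow> (\<Sum>z\<in>U. e u z) \<noteq> 1"
      using no_leaf u by blast
    ultimately show ?thesis
      by auto
  qed
  then have "(\<Sum>u\<in>U. if u = v then 1 else 2) \<le> (\<Sum>u\<in>U. \<Sum>z\<in>U. e u z)"
    by (rule sum_mono)
  moreover have "(\<Sum>u\<in>U. if u = v then 1 else 2::nat) = 1 + 2 * (card U - 1)"
    using assms(2,3) by (simp add: sum.If_cases Int_absorb1 flip: Diff_eq)
  ultimately show False
    using tree unfolding is_tree_on_def by simp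
qed

text \<open>Every walk in \<open>U\<close> projects to a walk in \<open>U - {l}\<close> by replacing the leaf \<open>l\<close>
  with its only neighbour \<open>p\<close>.\<close>
lemma connected_on_remove_leaf:
  assumes conn: "connected_on U e" and e_sym: "\<forall>a b. e a b = e b a"
    and "l \<in> U" "p \<in> U" "p \<noteq> l" and only_p: "\<forall>z\<in>U - {p}. e l z = 0"
  shows "connected_on (U - {l}) e"
proof -
  let ?R = "\<lambda>a b. a \<in> U \<and> b \<in> U \<and> 0 < e a b"
  let ?R' = "\<lambda>a b. a \<in> U - {l} \<and> b \<in> U - {l} \<and> 0 < e a b"
  define \<phi> where "\<phi> z = (if z = l then p else z)" for z
  have project: "?R'\<^sup>*\<^sup>* (\<phi> a) (\<phi> b)" if "?R\<^sup>*\<^sup>* a b" for a b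
    using that
  proof (induction rule: rtranclp_induct)
    case (step b c)
    have "e l z = 0" if "z \<in> U" "z \<noteq> p" for z
      using only_p that by blast
    then have "\<phi> b = \<phi> c \<or> ?R' (\<phi> b) (\<phi> c)"
      using step.hyps(2) e_sym \<open>p \<noteq> l\<close> unfolding \<phi>_def by (cases "b = l"; cases "c = l") fastforce+
    then show ?case
      using step.IH by (auto intro: rtranclp.rtrancl_into_rtrancl)
  qed simp
  have "?R'\<^sup>*\<^sup>* a b" if "a \<in> U - {l}" "b \<in> U - {l}" for a b
  proof -
    have "?R\<^sup>*\<^sup>* a b"
      using conn that unfolding connected_on_def by blast
    then show ?thesis
      using project[of a b] that by (simp add: \<phi>_def)
  qed
  then show ?thesis
    using \<open>p \<in> U\<close> \<open>p \<noteq> l\<close> unfolding connected_on_def by blast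
qed

lemma is_tree_on_remove_leaf:
  assumes tree: "is_tree_on U e" and "finite U"
    and e_sym: "\<forall>a b. e a b = e b a" and e_loopless: "\<forall>a. e a a = 0"
    and "l \<in> U" "p \<in> U" "p \<noteq> l" "e l p = 1" and only_p: "\<forall>z\<in>U - {p}. e l z = 0"
  shows "is_tree_on (U - {l}) e"
proof -
  let ?U' = "U - {l}"
  have out: "(\<Sum>w\<in>U. e l w) = 1"
    using assms by (subst sum.remove[of _ p]) auto
  have "(\<Sum>u\<in>?U'. e u l) = (\<Sum>u\<in>?U'. e l u)"
    using e_sym by simp
  also have "\<dots> = 1"
    using assms by (subst sum.remove[of _ p]) auto
  finally have "(\<Sum>u\<in>U. \<Sum>w\<in>U. e u w) = 2 + (\<Sum>u\<in>?U'. \<Sum>w\<in>?U'. e u w)"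
    using assms out by (simp add: sum.remove[of U l] sum.distrib)
  moreover have "2 \<le> card U"
    using assms by (metis card_le_Suc0_iff_eq not_less_eq_eq numeral_2_eq_2)
  ultimately show ?thesis
    using tree connected_on_remove_leaf[OF _ e_sym \<open>l \<in> U\<close> \<open>p \<in> U\<close> \<open>p \<noteq> l\<close> only_p] assms(2,5)
    unfolding is_tree_on_def by auto
qed

text \<open>Leaf induction: remove a leaf \<open>l\<close> with neighbour \<open>p\<close>, move the value of \<open>h\<close> at \<open>l\<close>
  onto \<open>p\<close>, solve on the smaller tree, and then fire \<open>l\<close> just enough to cancel \<open>h l\<close>.\<close>
lemma tree_firing_solvable:
  assumes "is_tree_on U e" "finite U" "v \<in> U"
    and e_sym: "\<forall>a b. e a b = e b a" and e_loopless: "\<forall>a. e a a = 0"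
  shows "\<exists>x. x v = 0 \<and> (\<forall>u\<in>U - {v}. h u + firing_div U e x u = 0)"
  using assms(1-3)
proof (induction "card U" arbitrary: U h rule: less_induct)
  case less
  show ?case
  proof (cases "card U \<le> 1")
    case True
    then have "U = {v}"
      using less.prems by (auto simp: card_le_Suc0_iff_eq)
    then show ?thesis
      by auto
  next
    case False
    obtain l where l: "l \<in> U - {v}" "(\<Sum>z\<in>U. e l z) = 1"
      using tree_has_leaf[OF less.prems] False by auto
    then obtain p where p: "p \<in> U" "e l p = 1" "\<forall>z\<in>U - {p}. e l z = 0"
      using l(2) sum_eq_1_iff[OF less.prems(2), of "e l"] by fastforce
    have "p \<noteq> l"
      using p e_loopless by auto
    let ?U' = "U - {l}"
    let ?h' = "h(p := h p + h l)"
    have "is_tree_on ?U' e"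
      using l p \<open>p \<noteq> l\<close> by (intro is_tree_on_remove_leaf[OF less.prems(1,2) e_sym e_loopless]) auto
    moreover have "card ?U' < card U"
      using l less.prems(2) by (meson DiffD1 card_Diff1_less)
    moreover have "finite ?U'" "v \<in> ?U'"
      using less.prems l by auto
    ultimately obtain x' where "x' v = 0" and x': "\<forall>u\<in>?U' - {v}. ?h' u + firing_div ?U' e x' u = 0"
      using less.hyps by blast
    define x where "x = x'(l := x' p - h l)"
    have "h u + firing_div U e x u = 0" if u: "u \<in> U - {v}" for u
    proof (cases "u = l")
      case True
      have "vdeg U e l = 1"
        using l(2) by (simp add: vdeg_def flip: of_nat_sum)
      moreover have "(\<Sum>w\<in>U. x w * int (e w l)) = x p"
        using p e_sym less.prems(2) by (subst sum.remove[of _ p]) auto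
      moreover have "firing_div U e x l = x l * vdeg U e l - (\<Sum>w\<in>U. x w * int (e w l))"
        using less.prems(2) l e_loopless by (intro firing_div_eq) auto
      ultimately show ?thesis
        using True \<open>p \<noteq> l\<close> by (simp add: x_def)
    next
      case False
      have "firing_div ?U' e x u = firing_div ?U' e x' u"
        unfolding firing_div_def x_def by (rule sum.cong) auto
      moreover have "firing_div (insert l ?U') e x u = firing_div ?U' e x u + int (e l u) * (x u - x l)"
        using less.prems(2) u False e_sym e_loopless by (intro firing_div_insert) auto
      moreover have "insert l ?U' = U"
        using l by auto
      ultimately have "firing_div U e x u = firing_div ?U' e x' u + int (e l u) * (x' u - x l)"
        using False by (simp add: x_def)
      moreover have "u \<noteq> p \<Longrightarrow> e l u = 0"
        using p u by blast
      ultimately show ?thesis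
        using x'[rule_format, of u] u False p(2) by (cases "u = p") (auto simp: x_def)
    qed
    then show ?thesis
      using \<open>x' v = 0\<close> l by (intro exI[of _ x]) (auto simp: x_def)
  qed
qed

locale cut_decomposition =
  fixes V V1 U :: "'a set" and e :: "'a \<Rightarrow> 'a \<Rightarrow> nat" and v :: 'a
  assumes graph: "is_graph V e" and decomp: "decomposes V e v V1 U"
begin

abbreviation "e1 \<equiv> induced e V1"

lemma V_eq: "V = V1 \<union> U" and V1_Int_U: "V1 \<inter> U = {v}"
  using decomp unfolding decomposes_def by blast+

lemma finite_V: "finite V" and finite_V1: "finite V1" and finite_U: "finite U"
  using graph V_eq unfolding is_graph_def by auto

lemma v_in: "v \<in> V1" "v \<in> U"
  using V1_Int_U by blast+

lemma e_sym: "\<forall>a b. e a b = e b a" and e_loopless: "\<forall>a. e a a = 0"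
  using graph unfolding is_graph_def by blast+

lemma no_cross_edge:
  assumes "a \<in> V1 - U" "b \<in> U - V1"
  shows "e a b = 0 \<and> e b a = 0"
proof -
  have "a \<in> V1 - {v}" "b \<in> U - {v}"
    using assms v_in by auto
  then have "e a b = 0"
    using decomp unfolding decomposes_def by blast
  moreover have "e b a = e a b"
    using e_sym by blast
  ultimately show ?thesis
    by simp
qed

lemma firing_div_V1:
  assumes "u \<in> V1 - {v}"
  shows "firing_div V e x u = firing_div V1 e1 x u"
proof -
  have "u \<in> V1 - U"
    using assms V1_Int_U by blast
  then have "\<forall>w\<in>V - V1. e u w = 0"
    using V_eq by (auto simp: no_cross_edge)
  then have "firing_div V e x u = firing_div V1 e x u"
    using assms V_eq finite_V e_sym by (intro firing_div_subset) auto
  then show ?thesis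
    using assms firing_div_induced by fastforce
qed

lemma firing_div_U:
  assumes "u \<in> U - {v}"
  shows "firing_div V e x u = firing_div U e x u"
proof -
  have "u \<in> U - V1"
    using assms V1_Int_U by blast
  then have "\<forall>w\<in>V - U. e u w = 0"
    using V_eq by (auto simp: no_cross_edge)
  then show ?thesis
    using assms V_eq finite_V e_sym by (intro firing_div_subset) auto
qed

text \<open>Both Laplacians have zero column sums, so at \<open>v\<close> each side is minus the sum of the
  values on \<open>V1 - {v}\<close>, where they agree.\<close>
lemma contract_firing_div:
  assumes "u \<in> V1"
  shows "contract U v (firing_div V e x) u = firing_div V1 e1 x u"
proof (cases "u = v")
  case True
  have "V = U \<union> (V1 - {v})" "U \<inter> (V1 - {v}) = {}"
    using V_eq V1_Int_U by blast+
  then have "0 = (\<Sum>w\<in>U. firing_div V e x w) + (\<Sum>w\<in>V1 - {v}. firing_div V e x w)"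
    using sum_firing_div[of V e x] finite_V1 finite_U e_loopless by (simp add: sum.union_disjoint)
  also have "(\<Sum>w\<in>V1 - {v}. firing_div V e x w) = (\<Sum>w\<in>V1 - {v}. firing_div V1 e1 x w)"
    using firing_div_V1 by simp
  also have "\<dots> = - firing_div V1 e1 x v"
  proof -
    have "\<forall>a. e1 a a = 0"
      using e_loopless by (simp add: induced_def)
    then have "firing_div V1 e1 x v + (\<Sum>w\<in>V1 - {v}. firing_div V1 e1 x w) = 0"
      using sum_firing_div[of V1 e1 x] finite_V1 v_in by (simp add: sum.remove)
    then show ?thesis
      by linarith
  qed
  finally show ?thesis
    using True by (simp add: contract_def)
next
  case False
  then show ?thesis
    using assms firing_div_V1 by (simp add: contract_def)
qed

lemma contract_effective:
  assumes "effective V g"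
  shows "effective V1 (contract U v g)"
  using assms V_eq unfolding effective_def contract_def by (auto intro: sum_nonneg)

lemma div_degree_contract: "div_degree V1 (contract U v D) = div_degree V D"
proof -
  have "V = U \<union> (V1 - {v})" "U \<inter> (V1 - {v}) = {}"
    using V_eq V1_Int_U by blast+
  then show ?thesis
    using finite_V1 finite_U v_in
    by (simp add: div_degree_def sum.union_disjoint sum.remove contract_def)
qed

lemma contract_extend_by_zero:
  assumes "D0 = (\<lambda>u. if u \<in> V1 then D u else 0)"
  shows "contract U v D0 = D0" and "div_degree V D0 = div_degree V1 D"
proof -
  show "contract U v D0 = D0"
    using assms finite_U v_in V1_Int_U by (intro contract_vanishing) auto
  then have "div_degree V D0 = div_degree V1 D0"
    using div_degree_contract[of D0] by simp
  also have "\<dots> = div_degree V1 D"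
    unfolding div_degree_def assms by (rule sum.cong) auto
  finally show "div_degree V D0 = div_degree V1 D" .
qed

end

locale tree_decomposition = cut_decomposition +
  assumes tree: "is_tree_on U e"
begin

lemma firing_to_vanish_on_tree:
  "\<exists>x. (\<forall>w\<in>V1. x w = 0) \<and> (\<forall>u\<in>U - {v}. h u + firing_div V e x u = 0)"
proof -
  obtain z where "z v = 0" and z: "\<forall>u\<in>U - {v}. h u + firing_div U e z u = 0"
    using tree_firing_solvable[OF tree finite_U v_in(2) e_sym e_loopless] by blast
  define x where "x w = (if w \<in> U then z w else 0)" for w
  have "firing_div U e x u = firing_div U e z u" for u
    unfolding firing_div_def x_def by (rule sum.cong) auto
  then have "firing_div V e x u = firing_div U e z u" if "u \<in> U - {v}" for u
    using firing_div_U[OF that] by simp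
  moreover have "w = v" if "w \<in> V1" "w \<in> U" for w
    using that V1_Int_U by blast
  ultimately show ?thesis
    using z \<open>z v = 0\<close> by (intro exI[of _ x]) (auto simp: x_def)
qed

lemma L_effective_contract_iff:
  "L_effective V e h \<longleftrightarrow> L_effective V1 e1 (contract U v h)"
proof
  assume "L_effective V e h"
  then obtain g x where g: "\<forall>u\<in>V. g u = h u + firing_div V e x u" and "effective V g"
    unfolding L_effective_def lin_equiv_iff_firing_div by blast
  have "contract U v g u = contract U v h u + firing_div V1 e1 x u" if "u \<in> V1" for u
  proof -
    have "contract U v g u = contract U v (\<lambda>u. h u + firing_div V e x u) u"
      using g that V_eq by (auto simp: contract_def)
    then show ?thesis
      using that by (simp add: contract_add contract_firing_div)
  qed
  then show "L_effective V1 e1 (contract U v h)"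
    using contract_effective[OF \<open>effective V g\<close>]
    unfolding L_effective_def lin_equiv_iff_firing_div by blast
next
  assume "L_effective V1 e1 (contract U v h)"
  then obtain g1 y where g1: "\<forall>u\<in>V1. g1 u = contract U v h u + firing_div V1 e1 y u"
    and "effective V1 g1"
    unfolding L_effective_def lin_equiv_iff_firing_div by blast
  define h1 where "h1 = (\<lambda>u. h u + firing_div V e y u)"
  obtain z where z0: "\<forall>w\<in>V1. z w = 0" and z: "\<forall>u\<in>U - {v}. h1 u + firing_div V e z u = 0"
    using firing_to_vanish_on_tree by blast
  define h2 where "h2 = (\<lambda>u. h1 u + firing_div V e z u)"
  have contract_h2: "contract U v h2 = h2"
    using z finite_U v_in by (intro contract_vanishing) (auto simp: h2_def)
  have g1_h2: "contract U v h2 u = g1 u" if "u \<in> V1" for u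
  proof -
    have "firing_div V1 e1 z u = 0"
      using z0 by (simp add: firing_div_def)
    then show ?thesis
      using g1 that by (simp add: h2_def h1_def contract_add contract_firing_div)
  qed
  have "0 \<le> h2 u" if "u \<in> V" for u
  proof (cases "u \<in> V1")
    case True
    then show ?thesis
      using \<open>effective V1 g1\<close> contract_h2 g1_h2 unfolding effective_def by metis
  next
    case False
    then have "u \<in> U - {v}"
      using that V_eq v_in by auto
    then show ?thesis
      using z by (simp add: h2_def)
  qed
  then have "effective V h2"
    unfolding effective_def by blast
  moreover have "\<forall>u\<in>V. h2 u = h u + firing_div V e (\<lambda>w. y w + z w) u"
    by (simp add: h2_def h1_def firing_div_add)
  ultimately show "L_effective V e h"
    unfolding L_effective_def lin_equiv_iff_firing_div by blast
qed

lemma rank_condition_contract_iff: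
  "(\<forall>D. effective V D \<and> div_degree V D = r \<longrightarrow> L_effective V e (\<lambda>u. f u - D u))
   \<longleftrightarrow> (\<forall>D. effective V1 D \<and> div_degree V1 D = r \<longrightarrow> L_effective V1 e1 (\<lambda>u. contract U v f u - D u))"
proof (intro iffI allI impI)
  fix D assume H: "\<forall>D. effective V D \<and> div_degree V D = r \<longrightarrow> L_effective V e (\<lambda>u. f u - D u)"
    and D: "effective V1 D \<and> div_degree V1 D = r"
  define D0 where "D0 = (\<lambda>u. if u \<in> V1 then D u else 0)"
  have "effective V D0"
    using D unfolding effective_def D0_def by auto
  then have "L_effective V e (\<lambda>u. f u - D0 u)"
    using H D contract_extend_by_zero(2)[OF D0_def] by simp
  then have "L_effective V1 e1 (\<lambda>u. contract U v f u - contract U v D0 u)"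
    by (simp add: L_effective_contract_iff contract_diff)
  moreover have "L_effective V1 e1 (\<lambda>u. contract U v f u - D u)
      \<longleftrightarrow> L_effective V1 e1 (\<lambda>u. contract U v f u - D0 u)"
    by (rule L_effective_cong) (simp add: D0_def)
  ultimately show "L_effective V1 e1 (\<lambda>u. contract U v f u - D u)"
    unfolding contract_extend_by_zero(1)[OF D0_def] by simp
next
  fix D assume H: "\<forall>D. effective V1 D \<and> div_degree V1 D = r \<longrightarrow> L_effective V1 e1 (\<lambda>u. contract U v f u - D u)"
    and D: "effective V D \<and> div_degree V D = r"
  then have "L_effective V1 e1 (\<lambda>u. contract U v f u - contract U v D u)"
    using contract_effective div_degree_contract by simp
  then show "L_effective V e (\<lambda>u. f u - D u)"
    by (simp add: L_effective_contract_iff contract_diff)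
qed

lemma div_rank_contract: "div_rank V e f = div_rank V1 e1 (contract U v f)"
  unfolding div_rank_def rank_condition_contract_iff by (simp only: L_effective_contract_iff)

end

theorem mainTheorem3:
  fixes V V1 U :: "'a set" and e :: "'a \<Rightarrow> 'a \<Rightarrow> nat" and v :: 'a and f :: "'a \<Rightarrow> int"
  assumes "is_graph V e" and "connected_on V e"
    and "cut_vertex V e v" and "decomposes V e v V1 U"
    and "is_tree_on U e"
  shows "div_rank V e f = div_rank V1 (induced e V1) (contract U v f)"
proof -
  interpret tree_decomposition V V1 U e v
    using assms(1,4,5) by unfold_locales
  show ?thesis
    by (rule div_rank_contract)
qed

end
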